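(* For every $F\in\mathbb{N}^5\setminus\{0\}$, $$\sqrt{2}^{\,\|F-1\|}\le N(F).$$
   Context: $\mathbb{N}=\{0,1,2,\dots\}$. A GNS is a submonoid $S\subseteq\mathbb{N}^d$ with finite complement $\mathcal{H}(S)=\mathbb{N}^d\setminus S$. A Frobenius GNS with Frobenius gap $F$ is a GNS such that $F$ is the unique maximal element of $\mathcal{H}(S)$ for the natural partial order. $N(F)$ is the number of Frobenius GNS $S\subseteq\mathbb{N}^d$ (here $d=5$) with Frobenius gap $F$. $\|F-1\|=\prod_{i=1}^5F^{(i)}$. *)

theory Defs
  imports "HOL-Analysis.Analysis"
begin

definition vle :: "nat ^ 'd \<Rightarrow> nat ^ 'd \<Rightarrow> bool" where
  "vle x y \<longleftrightarrow> (\<forall>i. x $ i \<le> y $ i)"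

definition GNS :: "(nat ^ 'd) set \<Rightarrow> bool" where
  "GNS S \<longleftrightarrow> 0 \<in> S \<and> (\<forall>x\<in>S. \<forall>y\<in>S. x + y \<in> S) \<and> finite (UNIV - S)"

definition gaps :: "(nat ^ 'd) set \<Rightarrow> (nat ^ 'd) set" where
  "gaps S = UNIV - S"

definition is_maximal_gap :: "(nat ^ 'd) set \<Rightarrow> nat ^ 'd \<Rightarrow> bool" where
  "is_maximal_gap S h \<longleftrightarrow> h \<in> gaps S \<and> (\<forall>g\<in>gaps S. vle h g \<longrightarrow> g = h)"

definition Frobenius_GNS :: "(nat ^ 'd) set \<Rightarrow> nat ^ 'd \<Rightarrow> bool" where
  "Frobenius_GNS S F \<longleftrightarrow> GNS S \<and> is_maximal_gap S F \<and> (\<forall>h. is_maximal_gap S h \<longrightarrow> h = F)"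

definition NF :: "nat ^ 'd \<Rightarrow> nat" where
  "NF F = card {S. Frobenius_GNS S F}"

end

theory Submission
  imports Defs
begin

text \<open>
  Fix a coordinate \<open>j\<close> and let \<open>B\<close> be the set of points \<open>x \<le> F\<close>, \<open>x \<noteq> F\<close>, with \<open>2 * x$j > F$j\<close>.
  For every \<open>A \<subseteq> B\<close> the set \<open>{0} \<union> A \<union> {x. \<not> x \<le> F}\<close> is a Frobenius GNS with Frobenius
  gap \<open>F\<close>: a sum of two nonzero elements of it either leaves the box below \<open>F\<close> or has \<open>j\<close>-th
  coordinate exceeding \<open>F$j\<close>. Hence \<open>N(F) \<ge> 2^|B|\<close>. On the other hand, every point of the box
  \<open>{x. \<forall>i. x$i < F$i}\<close>, of size \<open>\<Prod>i. F$i\<close>, lifts into \<open>B\<close> by replacing \<open>x$j\<close> either by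
  \<open>x$j + 1\<close> or by \<open>F$j - x$j\<close>; any second coordinate keeps the lift different from \<open>F\<close>.
  So the box is covered by two images of \<open>B\<close>, and \<open>\<Prod>i. F$i \<le> 2|B|\<close>.
\<close>

lemma vle_iff_less_eq: "vle x y \<longleftrightarrow> x \<le> y"
  by (simp add: vle_def less_eq_vec_def)

lemma vec_box_eq_image_PiE:
  "{x :: 'a ^ 'n. \<forall>i. P i (x $ i)} = vec_lambda ` (\<Pi>\<^sub>E i\<in>UNIV. {v. P i v})"
proof (rule set_eqI, rule iffI)
  fix x :: "'a ^ 'n"
  assume "x \<in> {x. \<forall>i. P i (x $ i)}"
  then have "vec_nth x \<in> (\<Pi>\<^sub>E i\<in>UNIV. {v. P i v})" by auto
  then show "x \<in> vec_lambda ` (\<Pi>\<^sub>E i\<in>UNIV. {v. P i v})"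
    by (metis image_eqI vec_lambda_eta)
qed auto

lemma card_vec_box: "card {x :: nat ^ 'n. \<forall>i. x $ i < F $ i} = (\<Prod>i\<in>UNIV. F $ i)"
proof -
  have "inj_on (vec_lambda :: ('n \<Rightarrow> nat) \<Rightarrow> nat ^ 'n) A" for A
    by (simp add: inj_on_def)
  then have "card {x :: nat ^ 'n. \<forall>i. x $ i < F $ i} = card (\<Pi>\<^sub>E i\<in>UNIV. {v. v < F $ i})"
    unfolding vec_box_eq_image_PiE[of "\<lambda>i v. v < F $ i"] by (rule card_image)
  also have "\<dots> = (\<Prod>i\<in>UNIV. F $ i)"
    by (simp add: card_PiE)
  finally show ?thesis .
qed

lemma finite_atMost_vec: "finite {..F :: nat ^ 'n}"
proof -
  have "{..F} = {x. \<forall>i. x $ i \<le> F $ i}"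
    by (auto simp: less_eq_vec_def)
  also have "\<dots> = vec_lambda ` (\<Pi>\<^sub>E i\<in>UNIV. {v. v \<le> F $ i})"
    by (rule vec_box_eq_image_PiE)
  finally show ?thesis
    by (simp add: finite_PiE)
qed

lemma Frobenius_GNS_gap_le:
  assumes "Frobenius_GNS S F" "g \<notin> S"
  shows "g \<le> F"
proof -
  have "finite (gaps S)" "g \<in> gaps S"
    using assms by (simp_all add: Frobenius_GNS_def GNS_def gaps_def)
  from finite_has_maximal2[OF this] obtain m
    where m: "m \<in> gaps S" "g \<le> m" "\<forall>h\<in>gaps S. m \<le> h \<longrightarrow> m = h"
    by blast
  then have "is_maximal_gap S m"
    by (auto simp: is_maximal_gap_def vle_iff_less_eq)
  with assms(1) have "m = F"
    by (simp add: Frobenius_GNS_def)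
  with m show ?thesis by simp
qed

lemma finite_Frobenius_GNS: "finite {S :: (nat ^ 'n) set. Frobenius_GNS S F}"
proof (rule finite_subset)
  show "{S. Frobenius_GNS S F} \<subseteq> (\<lambda>T. T \<union> - {..F}) ` Pow {..F}"
  proof
    fix S
    assume "S \<in> {S. Frobenius_GNS S F}"
    then have "S = (S \<inter> {..F}) \<union> - {..F}"
      using Frobenius_GNS_gap_le by fastforce
    then show "S \<in> (\<lambda>T. T \<union> - {..F}) ` Pow {..F}" by blast
  qed
  show "finite ((\<lambda>T. T \<union> - {..F}) ` Pow {..F :: nat ^ 'n})"
    by (simp add: finite_atMost_vec)
qed

definition upper_half :: "nat ^ 'n \<Rightarrow> 'n \<Rightarrow> (nat ^ 'n) set" where
  "upper_half F j = {x. x \<le> F \<and> x \<noteq> F \<and> F $ j < 2 * x $ j}"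

definition box_semigroup :: "nat ^ 'n \<Rightarrow> (nat ^ 'n) set \<Rightarrow> (nat ^ 'n) set" where
  "box_semigroup F A = insert 0 (A \<union> - {..F})"

lemma finite_upper_half: "finite (upper_half F j)"
  by (rule finite_subset[OF _ finite_atMost_vec[of F]]) (auto simp: upper_half_def)

lemma box_semigroup_add_closed:
  assumes "A \<subseteq> upper_half F j" "x \<in> box_semigroup F A" "y \<in> box_semigroup F A"
  shows "x + y \<in> box_semigroup F A"
proof (cases "x = 0 \<or> y = 0")
  case False
  have "\<not> x + y \<le> F"
  proof
    assume le: "x + y \<le> F"
    have "x \<le> x + y" "y \<le> x + y"
      by (auto simp: less_eq_vec_def)
    with le have "x \<le> F" "y \<le> F"
      by (meson order.trans)+
    with False assms have "x \<in> upper_half F j" "y \<in> upper_half F j"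
      by (auto simp: box_semigroup_def)
    then have "F $ j < (x + y) $ j"
      by (simp add: upper_half_def)
    with le show False
      by (simp add: less_eq_vec_def not_le[symmetric])
  qed
  then show ?thesis
    by (simp add: box_semigroup_def)
qed (use assms in auto)

lemma Frobenius_GNS_box_semigroup:
  assumes "F \<noteq> 0" "A \<subseteq> upper_half F j"
  shows "Frobenius_GNS (box_semigroup F A) F"
proof -
  let ?S = "box_semigroup F A"
  have gaps_le: "gaps ?S \<subseteq> {..F}"
    by (auto simp: box_semigroup_def gaps_def)
  have F_gap: "F \<in> gaps ?S"
    using assms by (auto simp: box_semigroup_def upper_half_def gaps_def)
  have "GNS ?S"
    using box_semigroup_add_closed[OF assms(2)] finite_subset[OF gaps_le finite_atMost_vec]
    by (auto simp: GNS_def gaps_def box_semigroup_def)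
  moreover have "is_maximal_gap ?S F"
    using F_gap gaps_le by (auto simp: is_maximal_gap_def vle_iff_less_eq)
  moreover have "h = F" if "is_maximal_gap ?S h" for h
    using that F_gap gaps_le by (auto simp: is_maximal_gap_def vle_iff_less_eq)
  ultimately show ?thesis
    by (simp add: Frobenius_GNS_def)
qed

lemma two_pow_card_upper_half_le_NF:
  assumes "F \<noteq> 0"
  shows "2 ^ card (upper_half F j) \<le> NF F"
proof -
  have "box_semigroup F A \<inter> upper_half F j = A" if "A \<subseteq> upper_half F j" for A
    using that assms by (auto simp: box_semigroup_def upper_half_def)
  then have "inj_on (box_semigroup F) (Pow (upper_half F j))"
    by (metis PowD inj_onI)
  then have "2 ^ card (upper_half F j) = card (box_semigroup F ` Pow (upper_half F j))"
    by (simp add: card_image card_Pow finite_upper_half)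
  also have "\<dots> \<le> NF F"
    unfolding NF_def
    by (rule card_mono[OF finite_Frobenius_GNS])
      (use Frobenius_GNS_box_semigroup[OF assms] in auto)
  finally show ?thesis .
qed

lemma card_vec_box_le_twice_upper_half:
  fixes F :: "nat ^ 'n"
  assumes "k \<noteq> j"
  shows "(\<Prod>i\<in>UNIV. F $ i) \<le> 2 * card (upper_half F j)"
proof -
  let ?box = "{x :: nat ^ 'n. \<forall>i. x $ i < F $ i}"
  let ?B = "upper_half F j"
  define shift where "shift y = (\<chi> i. if i = j then y $ j - 1 else y $ i)" for y :: "nat ^ 'n"
  define reflect where "reflect y = (\<chi> i. if i = j then F $ j - y $ j else y $ i)" for y :: "nat ^ 'n"
  have "?box \<subseteq> shift ` ?B \<union> reflect ` ?B"
  proof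
    fix x
    assume x: "x \<in> ?box"
    define y where "y = (\<chi> i. if i = j then max (x $ j + 1) (F $ j - x $ j) else x $ i)"
    have "y \<le> F"
      using x by (auto simp: y_def less_eq_vec_def less_imp_le Suc_le_eq)
    moreover have "F $ j < 2 * y $ j"
      by (simp add: y_def max_def) arith
    moreover have "y $ k \<noteq> F $ k"
      using x assms by (simp add: y_def less_imp_neq)
    ultimately have "y \<in> ?B"
      by (auto simp: upper_half_def)
    moreover have "shift y = x \<or> reflect y = x"
    proof (cases "F $ j - x $ j \<le> x $ j + 1")
      case True
      then show ?thesis
        by (simp add: shift_def y_def vec_eq_iff max_def)
    next
      case False
      then show ?thesis
        using x by (simp add: reflect_def y_def vec_eq_iff max_def less_imp_le)
    qed
    ultimately show "x \<in> shift ` ?B \<union> reflect ` ?B"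
      by blast
  qed
  then have "card ?box \<le> card (shift ` ?B \<union> reflect ` ?B)"
    by (intro card_mono) (simp_all add: finite_upper_half)
  also have "\<dots> \<le> card (shift ` ?B) + card (reflect ` ?B)"
    by (rule card_Un_le)
  also have "\<dots> \<le> 2 * card ?B"
    using card_image_le[OF finite_upper_half, of shift F j]
      card_image_le[OF finite_upper_half, of reflect F j] by simp
  finally show ?thesis
    by (simp add: card_vec_box)
qed

lemma exists_two_indices:
  assumes "2 \<le> CARD('n)"
  obtains j k :: "'n :: finite" where "k \<noteq> j"
proof -
  fix j :: 'n
  have "\<not> (\<forall>k :: 'n. k = j)"
  proof
    assume "\<forall>k :: 'n. k = j"
    then have "CARD('n) = card {j}"
      by (intro arg_cong[where f = card]) auto
    with assms show False by simp
  qed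
  with that show ?thesis by blast
qed

lemma sqrt2_pow_prod_le_NF:
  fixes F :: "nat ^ 'n"
  assumes "F \<noteq> 0" "2 \<le> CARD('n)"
  shows "sqrt 2 ^ (\<Prod>i\<in>UNIV. F $ i) \<le> real (NF F)"
proof -
  obtain j k :: 'n where "k \<noteq> j"
    using exists_two_indices[OF assms(2)] .
  have "sqrt 2 ^ (\<Prod>i\<in>UNIV. F $ i) \<le> sqrt 2 ^ (2 * card (upper_half F j))"
    by (rule power_increasing[OF card_vec_box_le_twice_upper_half[OF \<open>k \<noteq> j\<close>]]) simp
  also have "\<dots> = 2 ^ card (upper_half F j)"
    by (simp add: power_mult)
  also have "\<dots> \<le> real (NF F)"
    using two_pow_card_upper_half_le_NF[OF assms(1)] by (metis of_nat_le_iff of_nat_numeral of_nat_power)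
  finally show ?thesis .
qed

theorem proposition5p3:
  fixes F :: "nat ^ 5"
  assumes "F \<noteq> 0"
  shows "sqrt 2 ^ (\<Prod>i\<in>UNIV. F $ i) \<le> real (NF F)"
  using sqrt2_pow_prod_le_NF[OF assms] by simp

end
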